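(* Let $s\ge1$ and let constants $M,N,m_1,m_2,n_1,n_2$ satisfy $0<N<1$, $M>N+s$, $n_1>1+\sqrt3$, $n_2>1$, $m_1>\sqrt2$ and $$m_2>\max\Big[n_2,\ \Big(\frac{m_1n_1+Mm_1^2n_1+n_1^2}{m_1^2}\Big)^{1/(1-N)},\ \Big(\frac{n_1}{2m_1}(1+\sqrt5)\Big)^{1/(M-N-s)}\Big].$$ Set $m(0)=m_1m_2^M$, $n(0)=n_1n_2^N$. Consider the system $$\dot b=-\tfrac12 b^2-(t+1)^s a^2-a+1,\qquad \dot a=-ba,$$ and let $\Omega=\{(a,b)\in\mathbb R^2:\ a>0,\ b>0,\ b>m(0)a-n(0)\}$. If $(a_0,b_0)\in\Omega$, then $0<b(t)$ and $a(t)\le a_0$ for all $t\ge0$. *)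

theory Defs
  imports Complex_Main
begin

definition Omega :: "real \<Rightarrow> real \<Rightarrow> (real \<times> real) set" where
  "Omega m0 n0 = {(a, b). a > 0 \<and> b > 0 \<and> b > m0 * a - n0}"

end

theory Submission
  imports Defs "HOL-Analysis.Analysis"
begin

text \<open>
  Besides \<open>a > 0\<close> and \<open>b > 0\<close>, the region is cut out by the moving barrier
  \<open>F(t) = b(t) - m(t) a(t) + n(t) > 0\<close> with \<open>m(t) = m1 (t + m2)^M\<close> and
  \<open>n(t) = n1 (t + n2)^N\<close>, which at \<open>t = 0\<close> is the third inequality defining Omega.
  None of \<open>a\<close>, \<open>b\<close>, \<open>F\<close> can be the first to vanish. It cannot be \<open>a\<close>,
  since \<open>a' = -b a\<close> is linear in \<open>a\<close>. If it is \<open>b\<close>, then \<open>F \<ge> 0\<close> bounds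
  \<open>a\<close> by \<open>n/m\<close>, which the choice of \<open>m2\<close> makes so small that
  \<open>b' = 1 - (t + 1)^s a^2 - a > 0\<close>. If it is \<open>F\<close>, substituting
  \<open>a = (n + b)/m\<close> turns \<open>F'\<close> into a quadratic in \<open>b \<ge> 0\<close> with positive
  coefficients, again by the choice of \<open>m2\<close>. Once \<open>a\<close> and \<open>b\<close> stay positive,
  \<open>a' = -b a \<le> 0\<close> gives \<open>a \<le> a0\<close>.
\<close>

lemma first_zero_of_continuous:
  fixes h :: "real \<Rightarrow> real"
  assumes cont: "continuous_on {0..} h" and h0: "0 < h 0" and t: "0 \<le> t" "h t \<le> 0"
  obtains T where "0 < T" "h T = 0" "\<And>x. 0 \<le> x \<Longrightarrow> x < T \<Longrightarrow> 0 < h x"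
proof -
  define S where "S = {0..t} \<inter> h -` {..0}"
  have "closed S"
    unfolding S_def using continuous_on_subset[OF cont]
    by (intro continuous_closed_preimage) auto
  moreover have "t \<in> S" and bdd: "bdd_below S"
    unfolding S_def using t by (auto intro: bdd_belowI[of _ 0])
  ultimately have "Inf S \<in> S"
    by (intro closed_contains_Inf) auto
  define T where "T = Inf S"
  have T: "0 \<le> T" "T \<le> t" "h T \<le> 0"
    using \<open>Inf S \<in> S\<close> unfolding T_def S_def by auto
  have below: "0 < h x" if "0 \<le> x" "x < T" for x
  proof (rule ccontr)
    assume "\<not> 0 < h x"
    then have "x \<in> S"
      unfolding S_def using that T by auto
    then show False
      using cInf_lower[OF _ bdd] that unfolding T_def by force
  qed
  have "T \<noteq> 0"
    using T h0 by auto
  with T have "0 < T" by simp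
  obtain x where "0 \<le> x" "x \<le> T" "h x = 0"
    using IVT2'[of h T 0 0] T h0 continuous_on_subset[OF cont] by force
  with below have "h T = 0"
    by (metis less_eq_real_def less_irrefl)
  with \<open>0 < T\<close> below show thesis
    using that by blast
qed

lemma deriv_nonpos_at_first_zero:
  fixes f :: "real \<Rightarrow> real"
  assumes "0 < T" "f T = 0" "\<And>x. 0 \<le> x \<Longrightarrow> x < T \<Longrightarrow> 0 < f x"
    and "(f has_real_derivative D) (at T within {0..})"
  shows "D \<le> 0"
proof (rule ccontr)
  assume "\<not> D \<le> 0"
  then obtain d where "0 < d" and dec: "\<And>h. 0 < h \<Longrightarrow> T - h \<in> {0..} \<Longrightarrow> h < d \<Longrightarrow> f (T - h) < f T"
    using has_real_derivative_pos_inc_left[OF assms(4)] by force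
  define h where "h = min (d / 2) T"
  have "f (T - h) < 0" "0 < f (T - h)"
    using dec[of h] assms \<open>0 < d\<close> unfolding h_def by auto
  then show False by simp
qed

lemma linear_decay_pos:
  fixes a c :: "real \<Rightarrow> real"
  assumes T: "0 \<le> T" and cont: "continuous_on {0..T} a" "continuous_on {0..T} c"
    and deriv: "\<And>x. 0 < x \<Longrightarrow> x < T \<Longrightarrow> (a has_real_derivative - c x * a x) (at x)"
    and nonneg: "\<And>x. 0 < x \<Longrightarrow> x < T \<Longrightarrow> 0 \<le> a x"
    and a0: "0 < a 0"
  shows "0 < a T"
proof -
  obtain K where K: "\<And>x. 0 \<le> x \<Longrightarrow> x \<le> T \<Longrightarrow> c x \<le> K"
    using continuous_attains_sup[OF compact_Icc _ cont(2)] T by fastforce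
  define g where "g x = a x * exp (K * x)" for x
  have "g 0 \<le> g T"
  proof (rule DERIV_nonneg_imp_increasing_open[OF T])
    fix x assume x: "0 < x" "x < T"
    have "(g has_real_derivative a x * exp (K * x) * (K - c x)) (at x)"
      unfolding g_def using deriv[OF x]
      by (auto intro!: derivative_eq_intros simp: algebra_simps)
    moreover have "0 \<le> a x * exp (K * x) * (K - c x)"
      using nonneg[OF x] K[of x] x by simp
    ultimately show "\<exists>y. (g has_real_derivative y) (at x) \<and> 0 \<le> y" by blast
  next
    show "continuous_on {0..T} g"
      unfolding g_def using cont(1) by (intro continuous_intros)
  qed
  then have "0 < a T * exp (K * T)"
    using a0 unfolding g_def by simp
  then show ?thesis
    by (simp add: zero_less_mult_iff)
qed

lemma le_initial_of_deriv_nonpos: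
  fixes f f' :: "real \<Rightarrow> real"
  assumes deriv: "\<And>x. 0 \<le> x \<Longrightarrow> (f has_real_derivative f' x) (at x within {0..})"
    and nonpos: "\<And>x. 0 \<le> x \<Longrightarrow> f' x \<le> 0" and t: "0 \<le> t"
  shows "f t \<le> f 0"
proof (rule DERIV_nonpos_imp_decreasing_open[OF t])
  show "\<exists>y. (f has_real_derivative y) (at x) \<and> y \<le> 0" if "0 < x" "x < t" for x
    using deriv[of x] nonpos[of x] that at_within_interior[of x "{0..}"] by auto
  have "continuous_on {0..} f"
    using deriv by (intro DERIV_continuous_on[where D = f']) auto
  then show "continuous_on {0..t} f"
    by (rule continuous_on_subset) auto
qed

lemma less_powr_of_root_less:
  fixes K e x y :: real
  assumes "0 < e" "0 \<le> K" "K powr (1 / e) < x" "x \<le> y"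
  shows "K < y powr e"
proof -
  have "K = (K powr (1 / e)) powr e"
    using assms by (simp add: powr_powr)
  also have "\<dots> < x powr e"
    using assms by (intro powr_less_mono2) auto
  also have "\<dots> \<le> y powr e"
    using assms by (intro powr_mono2) (auto intro: order_trans[OF powr_ge_zero less_imp_le])
  finally show ?thesis .
qed

lemma has_real_derivative_shifted_powr:
  fixes k c e t :: real
  assumes "0 < t + c"
  shows "((\<lambda>x. k * (x + c) powr e) has_real_derivative k * e * (t + c) powr (e - 1)) (at t within S)"
  using assms by (auto intro!: derivative_eq_intros)

lemma barrier_region_invariant:
  fixes a b m n m' n' P :: "real \<Rightarrow> real"
  assumes b': "\<And>t. 0 \<le> t \<Longrightarrow>
      (b has_real_derivative - (1/2) * (b t)\<^sup>2 - P t * (a t)\<^sup>2 - a t + 1) (at t within {0..})"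
    and a': "\<And>t. 0 \<le> t \<Longrightarrow> (a has_real_derivative - b t * a t) (at t within {0..})"
    and m': "\<And>t. 0 \<le> t \<Longrightarrow> (m has_real_derivative m' t) (at t within {0..})"
    and n': "\<And>t. 0 \<le> t \<Longrightarrow> (n has_real_derivative n' t) (at t within {0..})"
    and init: "0 < a 0" "0 < b 0" "m 0 * a 0 - n 0 < b 0"
    and b_exit: "\<And>t A. 0 \<le> t \<Longrightarrow> 0 < A \<Longrightarrow> m t * A \<le> n t \<Longrightarrow> P t * A\<^sup>2 + A < 1"
    and barrier_exit: "\<And>t A B. 0 \<le> t \<Longrightarrow> 0 < A \<Longrightarrow> 0 \<le> B \<Longrightarrow> B = m t * A - n t \<Longrightarrow>
        0 < - (1/2) * B\<^sup>2 - P t * A\<^sup>2 - A + 1 - (m' t * A + m t * (- B * A)) + n' t"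
    and t: "0 \<le> t"
  shows "0 < a t \<and> 0 < b t"
proof (rule ccontr)
  assume exit: "\<not> (0 < a t \<and> 0 < b t)"
  define F where "F t = b t - m t * a t + n t" for t
  define h where "h t = min (a t) (min (b t) (F t))" for t
  have F': "(F has_real_derivative
      (- (1/2) * (b t)\<^sup>2 - P t * (a t)\<^sup>2 - a t + 1) - (m' t * a t + (- b t * a t) * m t) + n' t)
      (at t within {0..})" if "0 \<le> t" for t
    unfolding F_def[abs_def] using that by (intro DERIV_add DERIV_diff DERIV_mult b' a' m' n')
  have cont: "continuous_on {0..} a" "continuous_on {0..} b" "continuous_on {0..} F"
    using a' b' F' by (auto intro!: DERIV_continuous_on)
  then have "continuous_on {0..} h"
    unfolding h_def by (intro continuous_on_min)
  moreover have "0 < h 0" "h t \<le> 0"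
    using init exit unfolding h_def F_def by auto
  ultimately obtain T where "0 < T" "h T = 0" and before: "\<And>x. 0 \<le> x \<Longrightarrow> x < T \<Longrightarrow> 0 < h x"
    using first_zero_of_continuous t by blast
  have T: "0 \<le> a T" "0 \<le> b T" "0 \<le> F T" "a T = 0 \<or> b T = 0 \<or> F T = 0"
    using \<open>h T = 0\<close> unfolding h_def by linarith+
  have pos: "0 < a x" "0 < b x" "0 < F x" if "0 \<le> x" "x < T" for x
    using before[OF that] unfolding h_def by simp_all
  have "0 < a T"
  proof (rule linear_decay_pos[where a = a and c = b and T = T])
    show "(a has_real_derivative - b x * a x) (at x)" if "0 < x" "x < T" for x
      using a'[of x] that at_within_interior[of x "{0..}"] by simp
    show "continuous_on {0..T} a" "continuous_on {0..T} b"
      using cont by (auto elim: continuous_on_subset)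
    show "0 \<le> a x" if "0 < x" "x < T" for x
      using pos(1)[of x] that by simp
  qed (use \<open>0 < T\<close> init in auto)
  with T consider "b T = 0" | "F T = 0"
    by auto
  then show False
  proof cases
    case 1
    then have "0 < - (1/2) * (b T)\<^sup>2 - P T * (a T)\<^sup>2 - a T + 1"
      using b_exit[of T "a T"] \<open>0 < a T\<close> \<open>0 \<le> F T\<close> \<open>0 < T\<close> unfolding F_def by simp
    with deriv_nonpos_at_first_zero[OF \<open>0 < T\<close> 1 pos(2) b'] \<open>0 < T\<close> show False
      by simp
  next
    case 2
    then have "0 < (- (1/2) * (b T)\<^sup>2 - P T * (a T)\<^sup>2 - a T + 1)
        - (m' T * a T + (- b T * a T) * m T) + n' T"
      using barrier_exit[of T "a T" "b T"] \<open>0 < a T\<close> \<open>0 \<le> b T\<close> \<open>0 < T\<close>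
      unfolding F_def by (simp add: ac_simps)
    with deriv_nonpos_at_first_zero[OF \<open>0 < T\<close> 2 pos(3) F'] \<open>0 < T\<close> show False
      by simp
  qed
qed

lemma golden_quadratic_lt_one:
  fixes z :: real
  assumes "0 \<le> z" "z * (1 + sqrt 5) < 2"
  shows "z\<^sup>2 + z < 1"
proof -
  define w where "w = (sqrt 5 - 1) / 2"
  have sqrt5: "sqrt 5 * sqrt 5 = 5" by simp
  have "w * (1 + sqrt 5) = 2" "w\<^sup>2 + w = 1"
    unfolding w_def using sqrt5 by (simp_all add: field_simps power2_eq_square)
  then have "z * (1 + sqrt 5) < w * (1 + sqrt 5)"
    using assms(2) by simp
  then have "z < w"
    by (rule mult_right_less_imp_less) simp
  then have "z\<^sup>2 < w\<^sup>2"
    using assms(1) by (simp add: power_strict_mono)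
  with \<open>z < w\<close> \<open>w\<^sup>2 + w = 1\<close> show ?thesis by linarith
qed

lemma forcing_lt_one_below_barrier:
  fixes u v s M N m1 n1 P A :: real
  assumes v: "1 \<le> v" "v \<le> u" and s: "0 \<le> s" and N: "0 \<le> N"
    and P: "0 \<le> P" "P \<le> u powr s" and m1: "0 < m1" and n1: "0 < n1"
    and A: "0 \<le> A" and below: "m1 * u powr M * A \<le> n1 * v powr N"
    and large: "n1 / (2 * m1) * (1 + sqrt 5) < u powr (M - N - s)"
  shows "P * A\<^sup>2 + A < 1"
proof -
  have u: "1 \<le> u" using v by linarith
  have "n1 * v powr N \<le> n1 * u powr N"
    using v N n1 by (intro mult_left_mono powr_mono2) auto
  with below have "m1 * u powr M * A \<le> n1 * u powr N"
    by linarith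
  then have A_le: "A \<le> n1 / m1 * u powr (N - M)"
    using m1 u by (simp add: powr_diff field_simps)
  define z where "z = u powr s * (n1 / m1 * u powr (N - M))"
  have us: "1 \<le> u powr s"
    using u s by (simp add: ge_one_powr_ge_zero)
  have Az: "u powr s * A \<le> z"
    unfolding z_def using A_le us by (intro mult_left_mono) auto
  have "P * A\<^sup>2 \<le> u powr s * A\<^sup>2"
    using P by (intro mult_right_mono) auto
  also have "\<dots> \<le> (u powr s)\<^sup>2 * A\<^sup>2"
    using us mult_left_mono[OF us, of "u powr s"] by (intro mult_right_mono) (auto simp: power2_eq_square)
  also have "\<dots> \<le> z\<^sup>2"
    using Az us A by (simp add: power_mono flip: power_mult_distrib)
  finally have PA: "P * A\<^sup>2 \<le> z\<^sup>2" .
  have "A \<le> z"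
    using mult_right_mono[OF us A(1)] Az by simp
  have "z = n1 / m1 / u powr (M - N - s)"
    unfolding z_def using u by (simp add: powr_diff powr_add field_simps)
  then have "z * (1 + sqrt 5) = 2 * (n1 / (2 * m1) * (1 + sqrt 5)) / u powr (M - N - s)"
    by simp
  also have "\<dots> < 2"
    using large u m1 by (subst pos_divide_less_eq) (auto simp: field_simps)
  finally have "z\<^sup>2 + z < 1"
    using A \<open>A \<le> z\<close> by (intro golden_quadratic_lt_one) auto
  with PA \<open>A \<le> z\<close> show ?thesis by linarith
qed

text \<open>The right-hand side is \<open>F' = b' - (m a)' + n'\<close> at a point where the barrier
  \<open>F = b - m a + n\<close> vanishes, with \<open>b = B\<close> and \<open>a = A\<close>.\<close>
lemma barrier_derivative_pos:
  fixes m m' n n' P A B :: real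
  assumes m: "0 < m" and P: "0 \<le> P" and m': "0 \<le> m'" and n: "2 \<le> n" and n': "0 \<le> n'"
    and B: "0 \<le> B" "B = m * A - n"
    and small: "P / m\<^sup>2 * n\<^sup>2 + (1 + m') / m * n < 1" "(1 + m') / m \<le> n / 2"
  shows "0 < - (1/2) * B\<^sup>2 - P * A\<^sup>2 - A + 1 - (m' * A + m * (- B * A)) + n'"
proof -
  define c where "c = P / m\<^sup>2"
  define k where "k = (1 + m') / m"
  have A: "A = (n + B) / m"
    using B(2) m by (simp add: field_simps)
  have expand: "- (1/2) * B\<^sup>2 - P * A\<^sup>2 - A + 1 - (m' * A + m * (- B * A)) + n'
      = (1 - c * n\<^sup>2 - k * n) + B * (n - 2 * c * n - k) + B\<^sup>2 * (1/2 - c) + n'"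
    unfolding A c_def k_def using m by (simp add: field_simps power2_eq_square)
  have "0 \<le> c" "0 \<le> k * n"
    unfolding c_def k_def using P m m' n by simp_all
  have small_c: "c * n\<^sup>2 + k * n < 1"
    using small(1) unfolding c_def k_def .
  have "c * 4 \<le> c * n\<^sup>2"
    using power_mono[OF n, of 2] \<open>0 \<le> c\<close> by (intro mult_left_mono) auto
  then have "c \<le> 1/4"
    using small_c \<open>0 \<le> k * n\<close> by linarith
  then have "2 * c * n \<le> 1/2 * n"
    using n by (intro mult_right_mono) auto
  then have "0 \<le> n - 2 * c * n - k"
    using small(2) unfolding k_def by linarith
  then have "0 \<le> B * (n - 2 * c * n - k)"
    using B(1) by simp
  moreover have "0 \<le> B\<^sup>2 * (1/2 - c)"
    using \<open>c \<le> 1/4\<close> by simp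
  ultimately show ?thesis
    unfolding expand using small_c n' by linarith
qed

lemma barrier_quadratic_bound:
  fixes u v s M N m1 n1 P :: real
  defines "m \<equiv> m1 * u powr M" and "m' \<equiv> m1 * M * u powr (M - 1)" and "n \<equiv> n1 * v powr N"
  assumes v: "1 \<le> v" "v \<le> u" and P: "0 \<le> P" "P \<le> u powr s"
    and s: "1 \<le> s" and N: "0 < N" and M: "N + s < M" and m1: "0 < m1" and n1: "0 < n1"
    and large: "(m1 * n1 + M * m1\<^sup>2 * n1 + n1\<^sup>2) / m1\<^sup>2 < u powr (1 - N)"
  shows "P / m\<^sup>2 * n\<^sup>2 + (1 + m') / m * n < 1"
proof -
  have u: "1 \<le> u" using v by linarith
  have n: "0 \<le> n" "n \<le> n1 * u powr N"
    unfolding n_def using v N n1 by (simp_all add: powr_mono2)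
  have "P / m\<^sup>2 * n\<^sup>2 \<le> u powr s / (m1 * u powr M)\<^sup>2 * (n1 * u powr N)\<^sup>2"
    unfolding m_def using P n m1 n1 by (intro mult_mono divide_right_mono power_mono) auto
  also have "\<dots> = (n1 / m1)\<^sup>2 * (u powr s * (u powr N)\<^sup>2 / (u powr M)\<^sup>2)"
    by (simp add: power_mult_distrib power_divide)
  also have "\<dots> = (n1 / m1)\<^sup>2 * u powr (s + 2 * N - 2 * M)"
    using u by (simp add: powr_power powr_add powr_diff)
  also have "\<dots> \<le> (n1 / m1)\<^sup>2 * u powr (N - 1)"
    using u M N s by (intro mult_left_mono powr_mono) auto
  finally have quadratic_term: "P / m\<^sup>2 * n\<^sup>2 \<le> (n1 / m1)\<^sup>2 * u powr (N - 1)" .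
  have "n / m \<le> n1 * u powr N / (m1 * u powr M)"
    unfolding m_def using n m1 by (intro divide_right_mono) auto
  also have "\<dots> = n1 / m1 * u powr (N - M)"
    by (simp add: powr_diff)
  also have "\<dots> \<le> n1 / m1 * u powr (N - 1)"
    using u M N s m1 n1 by (intro mult_left_mono powr_mono) auto
  finally have damping_term: "n / m \<le> n1 / m1 * u powr (N - 1)" .
  have "M / u * n \<le> M / u * (n1 * u powr N)"
    using n u M N s by (intro mult_left_mono) auto
  also have "\<dots> = M * n1 * u powr (N - 1)"
    using u by (simp add: powr_diff)
  finally have drift_term: "M / u * n \<le> M * n1 * u powr (N - 1)" .
  have "((n1 / m1)\<^sup>2 + n1 / m1 + M * n1) * u powr (N - 1)
      = (m1 * n1 + M * m1\<^sup>2 * n1 + n1\<^sup>2) / m1\<^sup>2 / u powr (1 - N)"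
    using m1 by (simp add: powr_minus_divide[of u "1 - N", simplified] field_simps power2_eq_square)
  also have "\<dots> < 1"
    using large u by (subst divide_less_eq_1_pos) auto
  finally have "((n1 / m1)\<^sup>2 + n1 / m1 + M * n1) * u powr (N - 1) < 1" .
  moreover have "(1 + m') / m * n = n / m + M / u * n"
    unfolding m_def m'_def using u m1 by (simp add: powr_diff field_simps)
  ultimately show ?thesis
    using quadratic_term damping_term drift_term by (simp add: distrib_right)
qed

lemma one_plus_inverse_lt_half:
  fixes x :: real
  assumes "1 + sqrt 3 < x"
  shows "1 + 1 / x < x / 2"
proof -
  have "0 < x"
    using assms real_sqrt_ge_zero[of 3] by linarith
  have "(sqrt 3)\<^sup>2 < (x - 1)\<^sup>2"
    using assms by (intro power_strict_mono) auto
  then have "2 * x + 2 < x * x"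
    by (simp add: power2_eq_square algebra_simps)
  then show ?thesis
    using \<open>0 < x\<close> by (simp add: field_simps)
qed

lemma barrier_rate_bound:
  fixes u v M N m1 n1 :: real
  defines "m \<equiv> m1 * u powr M" and "m' \<equiv> m1 * M * u powr (M - 1)" and "n \<equiv> n1 * v powr N"
  assumes v: "1 \<le> v" "v \<le> u" and N: "0 \<le> N" and M: "0 \<le> M"
    and m1: "1 \<le> m1" and n1: "1 + sqrt 3 < n1"
    and large: "(m1 * n1 + M * m1\<^sup>2 * n1 + n1\<^sup>2) / m1\<^sup>2 < u powr (1 - N)"
  shows "(1 + m') / m \<le> n / 2"
proof -
  have u: "1 \<le> u" using v by linarith
  have n1_pos: "0 < n1" using n1 real_sqrt_ge_zero[of 3] by linarith
  have "M * n1 < (n1 / m1)\<^sup>2 + n1 / m1 + M * n1"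
    using m1 n1_pos by (simp add: add_nonneg_pos)
  also have "\<dots> = (m1 * n1 + M * m1\<^sup>2 * n1 + n1\<^sup>2) / m1\<^sup>2"
    using m1 by (simp add: field_simps power2_eq_square)
  also have "\<dots> < u powr (1 - N)"
    by (rule large)
  also have "\<dots> \<le> u"
    using u N powr_mono[of "1 - N" 1 u] by simp
  finally have "M / u < 1 / n1"
    using u n1_pos by (simp add: field_simps)
  moreover have "1 \<le> m"
    unfolding m_def using mult_mono[OF m1 ge_one_powr_ge_zero[OF u M]] m1 by simp
  then have "1 / m \<le> 1"
    by simp
  moreover have "n1 \<le> n"
    unfolding n_def using v N n1_pos by (simp add: ge_one_powr_ge_zero)
  moreover have "(1 + m') / m = 1 / m + M / u"
    unfolding m_def m'_def using u m1 by (simp add: powr_diff field_simps)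
  ultimately show ?thesis
    using one_plus_inverse_lt_half[OF n1] by linarith
qed

lemma barrier_derivative_pos_on_boundary:
  fixes u v s M N m1 n1 P A B :: real
  assumes v: "1 \<le> v" "v \<le> u" and P: "0 \<le> P" "P \<le> u powr s"
    and s: "1 \<le> s" and N: "0 < N" and M: "N + s < M"
    and m1: "1 \<le> m1" and n1: "1 + sqrt 3 < n1"
    and large: "(m1 * n1 + M * m1\<^sup>2 * n1 + n1\<^sup>2) / m1\<^sup>2 < u powr (1 - N)"
    and B: "0 \<le> B" "B = m1 * u powr M * A - n1 * v powr N"
  shows "0 < - (1/2) * B\<^sup>2 - P * A\<^sup>2 - A + 1
      - (m1 * M * u powr (M - 1) * A + m1 * u powr M * (- B * A)) + n1 * N * v powr (N - 1)"
proof (rule barrier_derivative_pos)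
  have "1 \<le> u" using v by linarith
  then show "0 < m1 * u powr M" "0 \<le> m1 * M * u powr (M - 1)"
    using m1 M N s by auto
  have "1 \<le> sqrt 3"
    by (rule real_sqrt_ge_one) simp
  then have n1_ge: "2 \<le> n1"
    using n1 by linarith
  moreover have "n1 * 1 \<le> n1 * v powr N"
    using n1_ge v N by (intro mult_left_mono ge_one_powr_ge_zero) auto
  ultimately show "2 \<le> n1 * v powr N"
    by linarith
  show "0 \<le> n1 * N * v powr (N - 1)"
    using n1_ge N by simp
  show "P / (m1 * u powr M)\<^sup>2 * (n1 * v powr N)\<^sup>2
      + (1 + m1 * M * u powr (M - 1)) / (m1 * u powr M) * (n1 * v powr N) < 1"
    using barrier_quadratic_bound[OF v P s N M _ _ large] m1 n1_ge by simp
  show "(1 + m1 * M * u powr (M - 1)) / (m1 * u powr M) \<le> n1 * v powr N / 2"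
    using barrier_rate_bound[OF v _ _ m1 n1 large] N M s by simp
qed (use P B in auto)

theorem lemma4p3:
  fixes s M N m1 m2 n1 n2 a0 b0 :: real
    and a b :: "real \<Rightarrow> real"
  assumes hs: "s \<ge> 1"
    and hN: "0 < N" "N < 1"
    and hM: "M > N + s"
    and hn1: "n1 > 1 + sqrt 3"
    and hn2: "n2 > 1"
    and hm1: "m1 > sqrt 2"
    and hm2: "m2 > max n2 (max
               (((m1 * n1 + M * m1\<^sup>2 * n1 + n1\<^sup>2) / m1\<^sup>2) powr (1 / (1 - N)))
               ((n1 / (2 * m1) * (1 + sqrt 5)) powr (1 / (M - N - s))))"
    and hb': "\<And>t. t \<ge> 0 \<Longrightarrow>
               (b has_real_derivative (- (1/2) * (b t)\<^sup>2 - (t + 1) powr s * (a t)\<^sup>2 - a t + 1))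
                 (at t within {0..})"
    and ha': "\<And>t. t \<ge> 0 \<Longrightarrow>
               (a has_real_derivative (- b t * a t)) (at t within {0..})"
    and hinit: "a 0 = a0" "b 0 = b0"
    and hOmega: "(a0, b0) \<in> Omega (m1 * m2 powr M) (n1 * n2 powr N)"
  shows "\<forall>t \<ge> 0. 0 < b t \<and> a t \<le> a0"
proof -
  define m where "m t = m1 * (t + m2) powr M" for t
  define n where "n t = n1 * (t + n2) powr N" for t
  have "1 \<le> sqrt 2" "1 \<le> sqrt 3"
    by (rule real_sqrt_ge_one, simp)+
  then have m1: "1 \<le> m1" and n1: "1 \<le> n1"
    using hm1 hn1 by linarith+
  have m2: "n2 < m2" "1 < m2"
    using hm2 hn2 by auto
  have large: "(m1 * n1 + M * m1\<^sup>2 * n1 + n1\<^sup>2) / m1\<^sup>2 < (t + m2) powr (1 - N)"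
    "n1 / (2 * m1) * (1 + sqrt 5) < (t + m2) powr (M - N - s)" if "0 \<le> t" for t
    using hm2 hN hM hs m1 n1 that
    by (auto intro!: less_powr_of_root_less[where x = m2])
  have pos: "0 < a t \<and> 0 < b t" if "0 \<le> t" for t
  proof (rule barrier_region_invariant[where a = a and b = b and t = t and P = "\<lambda>t. (t + 1) powr s" and m = m and n = n
        and m' = "\<lambda>t. m1 * M * (t + m2) powr (M - 1)" and n' = "\<lambda>t. n1 * N * (t + n2) powr (N - 1)"])
    show "(m has_real_derivative m1 * M * (t + m2) powr (M - 1)) (at t within {0..})"
      "(n has_real_derivative n1 * N * (t + n2) powr (N - 1)) (at t within {0..})" if "0 \<le> t" for t
      unfolding m_def[abs_def] n_def[abs_def] using that m2 hn2
      by (auto intro!: has_real_derivative_shifted_powr)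
    show "0 < a 0" "0 < b 0" "m 0 * a 0 - n 0 < b 0"
      using hOmega hinit unfolding Omega_def m_def n_def by auto
    have P: "0 \<le> (t + 1) powr s" "(t + 1) powr s \<le> (t + m2) powr s" if "0 \<le> t" for t
      using that hs m2 by (auto intro: powr_mono2)
    show "(t + 1) powr s * A\<^sup>2 + A < 1" if "0 \<le> t" "0 < A" "m t * A \<le> n t" for t A
      using that P[OF that(1)] large(2)[OF that(1)] m2 hn2 hs hN m1 n1 unfolding m_def n_def
      by (intro forcing_lt_one_below_barrier[where u = "t + m2" and v = "t + n2" and M = M]) auto
    show "0 < - (1/2) * B\<^sup>2 - (t + 1) powr s * A\<^sup>2 - A + 1
        - (m1 * M * (t + m2) powr (M - 1) * A + m t * (- B * A)) + n1 * N * (t + n2) powr (N - 1)"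
      if "0 \<le> t" "0 < A" "0 \<le> B" "B = m t * A - n t" for t A B
      using that P[OF that(1)] large(1)[OF that(1)] m2 hn2 hs hN hM m1 hn1 unfolding m_def n_def
      by (intro barrier_derivative_pos_on_boundary) auto
  qed (use hb' ha' that in auto)
  then have decay: "- b t * a t \<le> 0" if "0 \<le> t" for t
    using that by (simp add: less_imp_le)
  show ?thesis
    using pos le_initial_of_deriv_nonpos[OF ha' decay] hinit by auto
qed

end
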